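(* The map $\mathfrak q:S^2\times S^1\to S^3$, $\mathfrak q(x,z)=u^{-1}zu$ for any $u\in S^3$ with $x=u^{-1}\mathbf iu$, has degree two.
   Context: $S^3$ is the group of unit quaternions, $S^2$ the unit purely imaginary quaternions, $S^1=\{a+b\mathbf i:a^2+b^2=1\}\subset S^3$; $\mathfrak q$ is well defined since $u$ is determined by $x$ up to left multiplication by elements of $S^1$, which commute with $z$. Orientations: $\mathbb H\cong\mathbb C^2$ via $(z,w)\mapsto z+w\mathbf j$ with complex orientation $dq^0\wedge dq^1\wedge dq^2\wedge dq^3$, spheres oriented as boundaries (outer normal first), with normalized volume forms $\omega_{S^1}=\frac1{2\pi\mathbf i}z^{-1}dz$, $\omega_{S^2}=-\frac1{8\pi}x\,dx\wedge dx$, $\omega_{S^3}=-\frac1{12\pi^2}\mathrm{Re}((q^{-1}dq)^{\wedge3})$; $S^2\times S^1$ carries the product orientation, so the degree is $\int_{S^2\times S^1}\mathfrak q^*\omega_{S^3}$ with $\omega_{S^2}\wedge\omega_{S^1}$ positive. *)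

theory Defs
  imports "HOL-Analysis.Analysis"
begin

section \<open>Quaternions as C^2 via (z,w) |-> z + w j\<close>

type_synonym quat = "complex \<times> complex"

definition qmul :: "quat \<Rightarrow> quat \<Rightarrow> quat" where
  "qmul p q = (fst p * fst q - snd p * cnj (snd q), fst p * snd q + snd p * cnj (fst q))"

definition qcnj :: "quat \<Rightarrow> quat" where
  "qcnj q = (cnj (fst q), - snd q)"

definition qinv :: "quat \<Rightarrow> quat" where
  "qinv q = (1 / (norm q)\<^sup>2) *\<^sub>R qcnj q"

definition qRe :: "quat \<Rightarrow> real" where
  "qRe q = Re (fst q)"

definition qi :: quat where "qi = (\<i>, 0)"
definition qj :: quat where "qj = (0, 1)"
definition qk :: quat where "qk = (0, \<i>)"

text \<open>Coordinates: q = q0 + q1 i + q2 j + q3 k corresponds to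
  (q0 + q1 \<i>, q2 + q3 \<i>); the orientation dq0 dq1 dq2 dq3 is the complex one.\<close>

definition S3 :: "quat set" where "S3 = {q. norm q = 1}"
definition S2 :: "quat set" where "S2 = {x \<in> S3. qRe x = 0}"
definition S1 :: "quat set" where "S1 = {z \<in> S3. snd z = 0}"

definition frakq :: "quat \<times> quat \<Rightarrow> quat" where
  "frakq p = (let x = fst p; z = snd p;
                  u = (SOME u. u \<in> S3 \<and> x = qmul (qinv u) (qmul qi u))
              in qmul (qinv u) (qmul z u))"

text \<open>omega_S3 = -1/(12 pi^2) Re((q^{-1} dq)^3), where the wedge of quaternion-valued
  1-forms is (a1 ^ a2 ^ a3)(v1,v2,v3) = sum over permutations s of sgn s * a1(v_s1) a2(v_s2) a3(v_s3)
  (product in that order).\<close>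

definition omega_S3 :: "quat \<Rightarrow> quat \<Rightarrow> quat \<Rightarrow> quat \<Rightarrow> real" where
  "omega_S3 q v1 v2 v3 =
     (let a = (\<lambda>v. qmul (qinv q) v);
          m = (\<lambda>x y z. qmul x (qmul y z))
      in - (1 / (12 * pi\<^sup>2)) *
         qRe (m (a v1) (a v2) (a v3) - m (a v1) (a v3) (a v2) - m (a v2) (a v1) (a v3)
            + m (a v2) (a v3) (a v1) + m (a v3) (a v1) (a v2) - m (a v3) (a v2) (a v1)))"

text \<open>omega_S2 = -1/(8 pi) x dx ^ dx, with (dx ^ dx)(a,b) = ab - ba; the value is real on
  tangent vectors, we take its real part.\<close>

definition omega_S2 :: "quat \<Rightarrow> quat \<Rightarrow> quat \<Rightarrow> real" where
  "omega_S2 x a b = - (1 / (8 * pi)) * qRe (qmul x (qmul a b - qmul b a))"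

text \<open>omega_S1 = 1/(2 pi i) z^{-1} dz (S1 sits in the first complex coordinate).\<close>

definition omega_S1 :: "quat \<Rightarrow> quat \<Rightarrow> real" where
  "omega_S1 z c = Re ((1 / (2 * pi * \<i>)) * (inverse (fst z) * fst c))"

definition omega_S2S1 :: "quat \<times> quat \<Rightarrow> quat \<times> quat \<Rightarrow> quat \<times> quat \<Rightarrow> quat \<times> quat \<Rightarrow> real" where
  "omega_S2S1 p v1 v2 v3 =
     omega_S2 (fst p) (fst v1) (fst v2) * omega_S1 (snd p) (snd v3)
   - omega_S2 (fst p) (fst v1) (fst v3) * omega_S1 (snd p) (snd v2)
   + omega_S2 (fst p) (fst v2) (fst v3) * omega_S1 (snd p) (snd v1)"

text \<open>Parametrization of S2 x S1 (a diffeomorphism off a null set):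
  (th, ph, t) |-> (sin th cos ph i + sin th sin ph j + cos th k, e^{it}).\<close>

definition param :: "real \<times> real \<times> real \<Rightarrow> quat \<times> quat" where
  "param s = (case s of (th, ph, t) \<Rightarrow>
     ((Complex 0 (sin th * cos ph), Complex (sin th * sin ph) (cos th)), (cis t, 0)))"

definition pd1 :: "(real \<times> real \<times> real \<Rightarrow> 'a::real_normed_vector) \<Rightarrow> real \<times> real \<times> real \<Rightarrow> 'a" where
  "pd1 F s = (case s of (a, b, c) \<Rightarrow> vector_derivative (\<lambda>r. F (r, b, c)) (at a))"
definition pd2 :: "(real \<times> real \<times> real \<Rightarrow> 'a::real_normed_vector) \<Rightarrow> real \<times> real \<times> real \<Rightarrow> 'a" where
  "pd2 F s = (case s of (a, b, c) \<Rightarrow> vector_derivative (\<lambda>r. F (a, r, c)) (at b))"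
definition pd3 :: "(real \<times> real \<times> real \<Rightarrow> 'a::real_normed_vector) \<Rightarrow> real \<times> real \<times> real \<Rightarrow> 'a" where
  "pd3 F s = (case s of (a, b, c) \<Rightarrow> vector_derivative (\<lambda>r. F (a, b, r)) (at c))"

text \<open>Degree of f : S2 x S1 -> S3 = integral over S2 x S1 of f^* omega_S3, where S2 x S1 is
  oriented by omega_S2 ^ omega_S1.  Computed in the chart param; the factor
  sgn((omega_S2 ^ omega_S1)(d param)) makes the chart orientation match the given one.\<close>

definition degree_S2S1 :: "(quat \<times> quat \<Rightarrow> quat) \<Rightarrow> real" where
  "degree_S2S1 f =
     integral (cbox (0, 0, 0) (pi, 2 * pi, 2 * pi))
       (\<lambda>s. sgn (omega_S2S1 (param s) (pd1 param s) (pd2 param s) (pd3 param s)) *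
            omega_S3 ((f \<circ> param) s) (pd1 (f \<circ> param) s) (pd2 (f \<circ> param) s) (pd3 (f \<circ> param) s))"

end

theory Submission
  imports Defs
begin

text \<open>Every \<open>x \<in> S\<^sup>2\<close> has the form \<open>u\<^sup>-\<^sup>1 \<i> u\<close>, and conjugation is real-linear, so
  \<open>frakq (x, a + b \<i>) = a + b x\<close>; in the polar chart the map reads
  \<open>(\<theta>, \<phi>, t) \<mapsto> cos t + sin t x(\<theta>, \<phi>)\<close>. For a unit quaternion \<open>q\<close> and tangent vectors \<open>v\<^sub>i\<close>
  the quaternions \<open>q\<^sup>-\<^sup>1 v\<^sub>i\<close> are pure imaginary, and the real part of their alternating triple
  product is \<open>-6\<close> times their determinant. Hence the pullback of \<open>\<omega>\<^sub>S\<^sub>3\<close> has density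
  \<open>sin \<theta> sin\<^sup>2 t / (2 \<pi>\<^sup>2)\<close>, while \<open>\<omega>\<^sub>S\<^sub>2 \<and> \<omega>\<^sub>S\<^sub>1\<close> has the nonnegative density
  \<open>sin \<theta> / (8 \<pi>\<^sup>2)\<close>, and the degree is \<open>2 \<cdot> 2\<pi> \<cdot> \<pi> / (2 \<pi>\<^sup>2) = 2\<close>.\<close>

lemma norm_quat_power2:
  "(norm (u::quat))\<^sup>2 = (Re (fst u))\<^sup>2 + (Im (fst u))\<^sup>2 + (Re (snd u))\<^sup>2 + (Im (snd u))\<^sup>2"
  by (cases u) (simp add: norm_Pair cmod_power2)

lemma S3_iff_norm_power2: "u \<in> S3 \<longleftrightarrow> (norm u)\<^sup>2 = 1"
  by (simp add: S3_def) (smt (verit) norm_ge_zero power2_eq_1_iff)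

lemma qinv_eq_qcnj: "u \<in> S3 \<Longrightarrow> qinv u = qcnj u"
  by (simp add: S3_def qinv_def)

lemma conj_S3_Complex:
  assumes "u \<in> S3"
  shows "qmul (qinv u) (qmul (Complex a b, 0) u) = (complex_of_real a, 0) + b *\<^sub>R qmul (qinv u) (qmul qi u)"
proof -
  have "qmul (qcnj u) (qmul (Complex a b, 0) u) = a *\<^sub>R qmul (qcnj u) u + b *\<^sub>R qmul (qcnj u) (qmul qi u)"
    by (cases u) (simp add: qmul_def qcnj_def qi_def complex_eq_iff algebra_simps)
  moreover have "qmul (qcnj u) u = (1, 0)"
    using assms unfolding S3_iff_norm_power2 norm_quat_power2
    by (cases u) (simp add: qmul_def qcnj_def complex_eq_iff power2_eq_square)
  ultimately show ?thesis
    by (simp add: qinv_eq_qcnj[OF assms] scaleR_conv_of_real)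
qed

lemma conj_qi_by_pure:
  "qmul (qcnj (Complex 0 (a/s), Complex (b/s) (c/s))) (qmul qi (Complex 0 (a/s), Complex (b/s) (c/s)))
     = (Complex 0 ((a\<^sup>2 - b\<^sup>2 - c\<^sup>2) / s\<^sup>2), Complex (2*a*b / s\<^sup>2) (2*a*c / s\<^sup>2))"
  by (simp add: qmul_def qcnj_def qi_def complex_eq_iff power2_eq_square diff_divide_distrib add_divide_distrib)

lemma ex_S3_conj_qi_eq:
  assumes "x \<in> S2" shows "\<exists>u. u \<in> S3 \<and> x = qmul (qinv u) (qmul qi u)"
proof -
  obtain p q r where x: "x = (Complex 0 p, Complex q r)" and pqr: "p\<^sup>2 + q\<^sup>2 + r\<^sup>2 = 1"
  proof -
    obtain z w where xz: "x = (z, w)" by (cases x)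
    have "Re z = 0" "(norm x)\<^sup>2 = 1"
      using assms xz by (simp_all add: S2_def qRe_def S3_iff_norm_power2)
    then show ?thesis using that[of "Im z" "Re w" "Im w"] xz norm_quat_power2[of x]
      by (cases z) auto
  qed
  show ?thesis
  proof (cases "p = -1")
    case True
    then have "q = 0" "r = 0" using pqr by (auto simp: power2_eq_square sum_squares_eq_zero_iff)
    then show ?thesis using True x
      by (intro exI[of _ qj]) (simp add: S3_def qinv_def qcnj_def qmul_def qi_def qj_def complex_eq_iff)
  next
    case False
    have "p\<^sup>2 \<le> 1" using pqr by (metis add.assoc le_add_same_cancel1 zero_le_power2 add_nonneg_nonneg)
    then have "p > -1" using False abs_le_square_iff[of p 1] by auto
    have norm_w: "(1 + p)\<^sup>2 + q\<^sup>2 + r\<^sup>2 = 2 + 2 * p"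
      using pqr by (simp add: power2_eq_square algebra_simps)
    define s where "s = sqrt (2 + 2 * p)"
    have s2: "s\<^sup>2 = 2 + 2 * p" using \<open>p > -1\<close> by (simp add: s_def)
    \<comment> \<open>\<open>u\<close> is the unit quaternion along \<open>\<i> + x\<close>; conjugation by it interchanges \<open>\<i>\<close> and \<open>x\<close>.\<close>
    define u where "u = (Complex 0 ((1 + p)/s), Complex (q/s) (r/s))"
    have "u \<in> S3"
    proof -
      have "((1 + p)/s)\<^sup>2 + (q/s)\<^sup>2 + (r/s)\<^sup>2 = ((1 + p)\<^sup>2 + q\<^sup>2 + r\<^sup>2) / s\<^sup>2"
        by (simp only: power_divide add_divide_distrib[symmetric])
      then show ?thesis
        unfolding u_def S3_iff_norm_power2 norm_quat_power2 norm_w s2 using \<open>p > -1\<close> by simp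
    qed
    moreover have "qmul (qinv u) (qmul qi u) = x"
    proof -
      have "(1 + p)\<^sup>2 - q\<^sup>2 - r\<^sup>2 = p * (2 + 2 * p)"
        using pqr by (simp add: power2_eq_square algebra_simps)
      then show ?thesis
        unfolding qinv_eq_qcnj[OF \<open>u \<in> S3\<close>] unfolding u_def conj_qi_by_pure s2 x
        using \<open>p > -1\<close> by (simp add: field_simps)
    qed
    ultimately show ?thesis by metis
  qed
qed

lemma frakq_Complex:
  assumes "x \<in> S2" shows "frakq (x, (Complex a b, 0)) = (complex_of_real a, 0) + b *\<^sub>R x"
proof -
  define u where "u = (SOME u. u \<in> S3 \<and> x = qmul (qinv u) (qmul qi u))"
  have "u \<in> S3 \<and> x = qmul (qinv u) (qmul qi u)"
    unfolding u_def by (rule someI_ex[OF ex_S3_conj_qi_eq[OF assms]])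
  then show ?thesis
    unfolding frakq_def Let_def fst_conv snd_conv u_def[symmetric] using conj_S3_Complex by simp
qed

definition imag_det :: "quat \<Rightarrow> quat \<Rightarrow> quat \<Rightarrow> real" where
  "imag_det a b c =
     Im (fst a) * (Re (snd b) * Im (snd c) - Im (snd b) * Re (snd c))
   - Re (snd a) * (Im (fst b) * Im (snd c) - Im (snd b) * Im (fst c))
   + Im (snd a) * (Im (fst b) * Re (snd c) - Re (snd b) * Im (fst c))"

lemma qRe_alternating_product_pure:
  assumes "qRe a = 0" "qRe b = 0" "qRe c = 0"
  shows "qRe (qmul a (qmul b c) - qmul a (qmul c b) - qmul b (qmul a c)
            + qmul b (qmul c a) + qmul c (qmul a b) - qmul c (qmul b a))
       = -6 * imag_det a b c"
  using assms by (simp add: qmul_def qRe_def imag_det_def algebra_simps)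

lemma omega_S2_eq_imag_det:
  assumes "qRe x = 0" "qRe a = 0" "qRe b = 0"
  shows "omega_S2 x a b = imag_det x a b / (4 * pi)"
proof -
  have "qRe (qmul x (qmul a b - qmul b a)) = -2 * imag_det x a b"
    using assms by (simp add: qmul_def qRe_def imag_det_def algebra_simps)
  then show ?thesis by (simp add: omega_S2_def)
qed

lemma omega_S3_eq_imag_det:
  assumes "q \<in> S3"
    and "qRe (qmul (qcnj q) v1) = 0" "qRe (qmul (qcnj q) v2) = 0" "qRe (qmul (qcnj q) v3) = 0"
  shows "omega_S3 q v1 v2 v3 =
           imag_det (qmul (qcnj q) v1) (qmul (qcnj q) v2) (qmul (qcnj q) v3) / (2 * pi\<^sup>2)"
  using assms(1) qRe_alternating_product_pure[OF assms(2-4)]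
  by (simp add: omega_S3_def Let_def S3_def qinv_def)

lemma omega_S1_rotation:
  assumes "z \<noteq> 0" shows "omega_S1 (z, 0) (\<i> * z, 0) = 1 / (2 * pi)"
  using assms by (simp add: omega_S1_def)

lemma param_eq:
  "param (th, ph, t) =
     ((Complex 0 (sin th * cos ph), Complex (sin th * sin ph) (cos th)), (Complex (cos t) (sin t), 0))"
  by (simp add: param_def complex_eq_iff)

lemma param_S2: "(Complex 0 (sin th * cos ph), Complex (sin th * sin ph) (cos th)) \<in> S2"
proof -
  have "(sin th * cos ph)\<^sup>2 + (sin th * sin ph)\<^sup>2 + (cos th)\<^sup>2 = 1"
    by (simp add: power_mult_distrib flip: distrib_left)
  then have "(Complex 0 (sin th * cos ph), Complex (sin th * sin ph) (cos th)) \<in> S3"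
    by (simp add: S3_iff_norm_power2 norm_quat_power2)
  then show ?thesis
    by (simp add: S2_def qRe_def)
qed

lemma frakq_param:
  "(frakq \<circ> param) (th, ph, t) =
     (Complex (cos t) (sin t * (sin th * cos ph)), Complex (sin t * (sin th * sin ph)) (sin t * cos th))"
  using frakq_Complex[OF param_S2[of th ph], of "cos t" "sin t"]
  by (simp add: param_eq complex_eq_iff)

lemma has_vector_derivative_Complex:
  "(f has_real_derivative f') (at x) \<Longrightarrow> (g has_real_derivative g') (at x) \<Longrightarrow>
   ((\<lambda>r. Complex (f r) (g r)) has_vector_derivative Complex f' g') (at x)"
  by (simp add: has_vector_derivative_complex_iff)

lemma pd1_param:
  "pd1 param (th, ph, t) =
     ((Complex 0 (cos th * cos ph), Complex (cos th * sin ph) (- sin th)), (0, 0))"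
  unfolding pd1_def param_eq split
  by (rule vector_derivative_at)
    (intro has_vector_derivative_Pair has_vector_derivative_Complex; auto intro!: derivative_eq_intros)

lemma pd2_param:
  "pd2 param (th, ph, t) =
     ((Complex 0 (- (sin th * sin ph)), Complex (sin th * cos ph) 0), (0, 0))"
  unfolding pd2_def param_eq split
  by (rule vector_derivative_at)
    (intro has_vector_derivative_Pair has_vector_derivative_Complex; auto intro!: derivative_eq_intros)

lemma pd3_param: "pd3 param (th, ph, t) = ((0, 0), (Complex (- sin t) (cos t), 0))"
  unfolding pd3_def param_eq split
  by (rule vector_derivative_at)
    (intro has_vector_derivative_Pair has_vector_derivative_Complex; auto intro!: derivative_eq_intros)

lemma pd1_frakq_param:
  "pd1 (frakq \<circ> param) (th, ph, t) =
     (Complex 0 (sin t * (cos th * cos ph)), Complex (sin t * (cos th * sin ph)) (sin t * (- sin th)))"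
  unfolding pd1_def frakq_param split
  by (rule vector_derivative_at)
    (intro has_vector_derivative_Pair has_vector_derivative_Complex; auto intro!: derivative_eq_intros)

lemma pd2_frakq_param:
  "pd2 (frakq \<circ> param) (th, ph, t) =
     (Complex 0 (sin t * (- (sin th * sin ph))), Complex (sin t * (sin th * cos ph)) 0)"
  unfolding pd2_def frakq_param split
  by (rule vector_derivative_at)
    (intro has_vector_derivative_Pair has_vector_derivative_Complex; auto intro!: derivative_eq_intros)

lemma pd3_frakq_param:
  "pd3 (frakq \<circ> param) (th, ph, t) =
     (Complex (- sin t) (cos t * (sin th * cos ph)), Complex (cos t * (sin th * sin ph)) (cos t * cos th))"
  unfolding pd3_def frakq_param split
  by (rule vector_derivative_at)
    (intro has_vector_derivative_Pair has_vector_derivative_Complex; auto intro!: derivative_eq_intros)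

lemma omega_S2S1_param:
  "omega_S2S1 (param (th, ph, t)) (pd1 param (th, ph, t)) (pd2 param (th, ph, t)) (pd3 param (th, ph, t))
     = sin th / (8 * pi\<^sup>2)"
proof -
  have "imag_det (Complex 0 (sin th * cos ph), Complex (sin th * sin ph) (cos th))
          (Complex 0 (cos th * cos ph), Complex (cos th * sin ph) (- sin th))
          (Complex 0 (- (sin th * sin ph)), Complex (sin th * cos ph) 0) = sin th"
    unfolding imag_det_def
    by simp (insert sin_cos_squared_add[of th] sin_cos_squared_add[of ph], algebra)
  moreover have "omega_S1 (Complex (cos t) (sin t), 0) (Complex (- sin t) (cos t), 0) = 1 / (2 * pi)"
  proof -
    have "Complex (cos t) (sin t) = cis t" "Complex (- sin t) (cos t) = \<i> * cis t"
      by (simp_all add: complex_eq_iff)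
    then show ?thesis using omega_S1_rotation[of "cis t"] by simp
  qed
  ultimately show ?thesis
    unfolding omega_S2S1_def param_eq pd1_param pd2_param pd3_param fst_conv snd_conv
    by (simp add: omega_S2_eq_imag_det qRe_def omega_S1_def power2_eq_square)
qed

lemma omega_S3_frakq_param:
  "omega_S3 ((frakq \<circ> param) (th, ph, t)) (pd1 (frakq \<circ> param) (th, ph, t))
      (pd2 (frakq \<circ> param) (th, ph, t)) (pd3 (frakq \<circ> param) (th, ph, t))
     = sin th * (sin t)\<^sup>2 / (2 * pi\<^sup>2)"
  (is "omega_S3 ?q ?v1 ?v2 ?v3 = _")
proof -
  note pythagoras = sin_cos_squared_add[of th] sin_cos_squared_add[of ph] sin_cos_squared_add[of t]
  have "?q \<in> S3"
    unfolding frakq_param S3_iff_norm_power2 norm_quat_power2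
    by simp (insert pythagoras, algebra)
  then have "omega_S3 ?q ?v1 ?v2 ?v3 =
      imag_det (qmul (qcnj ?q) ?v1) (qmul (qcnj ?q) ?v2) (qmul (qcnj ?q) ?v3) / (2 * pi\<^sup>2)"
    by (rule omega_S3_eq_imag_det; unfold frakq_param pd1_frakq_param pd2_frakq_param pd3_frakq_param;
        simp add: qmul_def qcnj_def qRe_def; insert pythagoras; algebra)
  also have "imag_det (qmul (qcnj ?q) ?v1) (qmul (qcnj ?q) ?v2) (qmul (qcnj ?q) ?v3) = sin th * (sin t)\<^sup>2"
    unfolding frakq_param pd1_frakq_param pd2_frakq_param pd3_frakq_param
    by (simp add: qmul_def qcnj_def imag_det_def) (insert pythagoras, algebra)
  finally show ?thesis .
qed

lemma integral_cbox_times: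
  fixes f :: "'a::euclidean_space \<Rightarrow> real" and g :: "'b::euclidean_space \<Rightarrow> real"
  assumes "continuous_on UNIV f" "continuous_on UNIV g"
  shows "integral (cbox (a, c) (b, d)) (\<lambda>s. f (fst s) * g (snd s)) = integral (cbox a b) f * integral (cbox c d) g"
proof -
  have "continuous_on UNIV (\<lambda>s. f (fst s))" "continuous_on UNIV (\<lambda>s. g (snd s))"
    by (auto intro: continuous_on_compose2[OF assms(1) continuous_on_fst]
                    continuous_on_compose2[OF assms(2) continuous_on_snd] continuous_on_id)
  then have "continuous_on (cbox (a, c) (b, d)) (\<lambda>s. f (fst s) * g (snd s))"
    by (intro continuous_on_mult) (auto intro: continuous_on_subset)
  then show ?thesis
    by (simp add: integral_prod_continuous)
qed

lemma integral_sin_power2: "integral {0..2*pi} (\<lambda>t. (sin t)\<^sup>2) = pi"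
proof -
  let ?F = "\<lambda>t::real. t/2 - sin (2*t)/4"
  have "((\<lambda>t. (sin t)\<^sup>2) has_integral (?F (2*pi) - ?F 0)) {0..2*pi}"
  proof (rule fundamental_theorem_of_calculus)
    fix x :: real
    have "(?F has_real_derivative (1/2 - cos (2*x) * 2 / 4)) (at x within {0..2*pi})"
      by (auto intro!: derivative_eq_intros)
    moreover have "1/2 - cos (2*x) * 2 / 4 = (sin x)\<^sup>2" using cos_double_sin[of x] by linarith
    ultimately show "(?F has_vector_derivative (sin x)\<^sup>2) (at x within {0..2*pi})"
      by (simp add: has_real_derivative_iff_has_vector_derivative)
  qed simp
  moreover have "sin (2 * (2*pi)) = 0" using sin_npi[of 4] by (simp add: mult.assoc)
  ultimately show ?thesis by (simp add: integral_unique)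
qed

lemma integral_sin_sin_power2:
  "integral (cbox (0, 0, 0) (pi, 2 * pi, 2 * pi)) (\<lambda>s. sin (fst s) * (sin (snd (snd s)))\<^sup>2 / (2 * pi\<^sup>2)) = 2"
proof -
  have "integral (cbox (0, 0) (2 * pi, 2 * pi)) (\<lambda>s. 1 * ((sin (snd s))\<^sup>2 / (2 * pi\<^sup>2)))
      = integral (cbox 0 (2 * pi)) (\<lambda>_. 1) * integral (cbox 0 (2 * pi)) (\<lambda>t. (sin t)\<^sup>2 / (2 * pi\<^sup>2))"
    by (rule integral_cbox_times) (auto intro!: continuous_intros)
  also have "\<dots> = 1"
    using integral_sin_power2 by (simp add: cbox_interval power2_eq_square)
  finally have inner: "integral (cbox (0, 0) (2 * pi, 2 * pi)) (\<lambda>s. (sin (snd s))\<^sup>2 / (2 * pi\<^sup>2)) = 1"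
    by (simp only: mult_1)
  have "integral (cbox (0, 0, 0) (pi, 2 * pi, 2 * pi)) (\<lambda>s. sin (fst s) * ((sin (snd (snd s)))\<^sup>2 / (2 * pi\<^sup>2)))
      = integral (cbox 0 pi) sin * integral (cbox (0, 0) (2 * pi, 2 * pi)) (\<lambda>s. (sin (snd s))\<^sup>2 / (2 * pi\<^sup>2))"
    by (rule integral_cbox_times) (auto intro!: continuous_intros)
  also have "\<dots> = 2"
    unfolding inner by (simp add: cbox_interval)
  finally show ?thesis by (simp only: times_divide_eq_right)
qed

theorem lemma10:
  shows "degree_S2S1 frakq = 2"
proof -
  have "degree_S2S1 frakq =
      integral (cbox (0, 0, 0) (pi, 2 * pi, 2 * pi)) (\<lambda>s. sin (fst s) * (sin (snd (snd s)))\<^sup>2 / (2 * pi\<^sup>2))"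
    unfolding degree_S2S1_def
  proof (rule integral_cong)
    fix s :: "real \<times> real \<times> real"
    assume "s \<in> cbox (0, 0, 0) (pi, 2 * pi, 2 * pi)"
    then obtain th ph t where s: "s = (th, ph, t)" and "0 \<le> th" "th \<le> pi"
      by (cases s) (auto simp: cbox_Pair_eq)
    then have "sin th \<ge> 0"
      by (simp add: sin_ge_zero)
    then have "sgn (sin th / (8 * pi\<^sup>2)) * sin th = sin th"
      by (cases "sin th = 0") (simp_all add: sgn_mult)
    then show "sgn (omega_S2S1 (param s) (pd1 param s) (pd2 param s) (pd3 param s)) *
        omega_S3 ((frakq \<circ> param) s) (pd1 (frakq \<circ> param) s) (pd2 (frakq \<circ> param) s) (pd3 (frakq \<circ> param) s)
      = sin (fst s) * (sin (snd (snd s)))\<^sup>2 / (2 * pi\<^sup>2)"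
      unfolding s omega_S2S1_param omega_S3_frakq_param by (auto simp: mult.assoc)
  qed
  also have "\<dots> = 2"
    by (rule integral_sin_sin_power2)
  finally show ?thesis .
qed

end
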